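(* Let $\Phi_D$ be a set of BS indices containing $0$, $\Psi_D=\Phi_D\setminus\{0\}$, $K\ge1$, $\tau_c>0$, $B_W>0$, and positive $p_{l'i},q_{l'i},\beta_{0l'i}$ ($l'\in\Phi_D$, $i=1,\dots,K$), with $k$ fixed, and define $$\mathrm{SIR}_{rp}=\frac{p_{0k}\beta_{00k}}{\frac1{\tau_c}\sum_{l'\in\Psi_D}\sum_{i=1}^K\frac{p_{l'i}q_{l'i}}{q_{0k}}\frac{\beta_{0l'i}^2}{\beta_{00k}}}.$$ The asymptotic ($M\to\infty$) regular-pilot rate $R^{a\text{-}rp}_{0k}=(1-\frac{\tau_p}{\tau_c})B_W\log_2\big(1+\frac{p_{0k}\beta_{00k}}{\frac1{\tau_p}\sum_{l'\in\Psi_D}\sum_{i=1}^K\frac{p_{l'i}q_{l'i}}{q_{0k}}\frac{\beta_{0l'i}^2}{\beta_{00k}}}\big)$, written as a function of $\zeta=\tau_p/\tau_c\in[0,1]$, is $f(\zeta)=B_W(1-\zeta)\log_2(1+\zeta\,\mathrm{SIR}_{rp})$. If $\mathrm{SIR}_{rp}>0$, then $f$ is concave on $[0,1]$ and its maximum over $[0,1]$ is attained at $$\zeta^{\max}=\frac{1}{\mathrm{SIR}_{rp}}\Big(\frac{1+\mathrm{SIR}_{rp}}{W\big((1+\mathrm{SIR}_{rp})e\big)}-1\Big)\in(0,1),$$ where $W$ is the Lambert $W$ function and $e$ is the base of the natural logarithm.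
   Context: The Lambert $W$ function is defined by $z=W(z)e^{W(z)}$ (principal branch for positive arguments). $\tau_p$ is the regular-pilot length, $\tau_c$ the coherence block length, $p_{l'i},q_{l'i}$ data and pilot powers of user $i$ in cell $l'$, $\beta_{0l'i}$ its large-scale fading coefficient to BS $0$. *)

theory Defs
  imports "HOL-Analysis.Analysis"
begin

text \<open>Principal branch of the Lambert W function on positive reals:
  for z > 0, W z is the unique w > 0 with w * exp w = z.\<close>
definition lambertW :: "real \<Rightarrow> real" where
  "lambertW z = (THE w. w > 0 \<and> w * exp w = z)"

text \<open>Interference term: sum over l' in Psi_D = Phi_D - {0}, i = 1..K of
  (p l' i * q l' i / q 0 k) * (beta l' i ^ 2 / beta 0 k), where beta l i
  stands for beta_{0 l i}.\<close>
definition interf ::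
  "nat set \<Rightarrow> nat \<Rightarrow> (nat \<Rightarrow> nat \<Rightarrow> real) \<Rightarrow> (nat \<Rightarrow> nat \<Rightarrow> real) \<Rightarrow> (nat \<Rightarrow> nat \<Rightarrow> real) \<Rightarrow> nat \<Rightarrow> real"
  where "interf PhiD K p q beta k =
    (\<Sum>l'\<in>PhiD - {0}. \<Sum>i=1..K. (p l' i * q l' i / q 0 k) * (beta l' i ^ 2 / beta 0 k))"

definition SIR_rp ::
  "nat set \<Rightarrow> nat \<Rightarrow> real \<Rightarrow> (nat \<Rightarrow> nat \<Rightarrow> real) \<Rightarrow> (nat \<Rightarrow> nat \<Rightarrow> real) \<Rightarrow> (nat \<Rightarrow> nat \<Rightarrow> real) \<Rightarrow> nat \<Rightarrow> real"
  where "SIR_rp PhiD K tau_c p q beta k =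
    p 0 k * beta 0 k / ((1 / tau_c) * interf PhiD K p q beta k)"

definition rate_arp ::
  "nat set \<Rightarrow> nat \<Rightarrow> real \<Rightarrow> real \<Rightarrow> (nat \<Rightarrow> nat \<Rightarrow> real) \<Rightarrow> (nat \<Rightarrow> nat \<Rightarrow> real) \<Rightarrow> (nat \<Rightarrow> nat \<Rightarrow> real) \<Rightarrow> nat \<Rightarrow> real \<Rightarrow> real"
  where "rate_arp PhiD K tau_c B_W p q beta k tau_p =
    (1 - tau_p / tau_c) * B_W *
      log 2 (1 + p 0 k * beta 0 k / ((1 / tau_p) * interf PhiD K p q beta k))"

end

theory Submission
  imports Defs
begin

text \<open>Substituting \<open>u = 1 + \<zeta> S\<close> turns the normalised rate \<open>(1 - \<zeta>) ln (1 + \<zeta> S)\<close> into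
  \<open>((1 + S) - u) ln u / S\<close>. Its stationary point \<open>m\<close> satisfies \<open>ln m = (1 + S)/m - 1\<close>, i.e.
  \<open>(1 + S)/m\<close> solves \<open>w e\<^sup>w = (1 + S) e\<close>, so \<open>m = (1 + S) / W((1 + S) e)\<close>. That this is the
  global maximum follows from the tangent bound \<open>ln u \<le> ln m + u/m - 1\<close>, which reduces the
  claim to \<open>(u - m)\<^sup>2 \<ge> 0\<close>.\<close>

lemma mult_exp_strict_mono:
  fixes a b :: real
  assumes "0 \<le> a" "a < b"
  shows "a * exp a < b * exp b"
  using assms by (intro mult_strict_mono) auto

lemma lambertW_mult_exp:
  fixes w :: real
  assumes "w > 0"
  shows "lambertW (w * exp w) = w"
  unfolding lambertW_def
proof (rule the_equality)
  show "w > 0 \<and> w * exp w = w * exp w" using assms by simp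
next
  fix v assume v: "v > 0 \<and> v * exp v = w * exp w"
  show "v = w"
  proof (cases v w rule: linorder_cases)
    case less
    then show ?thesis using mult_exp_strict_mono[of v w] v by simp
  next
    case greater
    then show ?thesis using mult_exp_strict_mono[of w v] v less_imp_le[OF assms] by simp
  qed
qed

lemma ex_mult_exp_eq:
  fixes z :: real
  assumes "z \<ge> 0"
  obtains w where "w \<ge> 0" "w * exp w = z"
proof -
  have "z \<le> z * exp z" using mult_left_mono[of 1 "exp z" z] assms by simp
  moreover have "continuous_on {0..z} (\<lambda>w. w * exp w)" by (intro continuous_intros)
  ultimately obtain w where "0 \<le> w" "w * exp w = z"
    using IVT'[of "\<lambda>w. w * exp w" 0 z z] assms by auto
  then show ?thesis by (rule that)
qed

lemma
  fixes z :: real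
  assumes "z > 0"
  shows lambertW_pos: "lambertW z > 0"
    and lambertW_times_exp: "lambertW z * exp (lambertW z) = z"
proof -
  obtain w where w: "w \<ge> 0" "w * exp w = z" using ex_mult_exp_eq[OF less_imp_le[OF assms]] by blast
  then have "w > 0" using assms by (cases "w = 0") auto
  moreover have "lambertW z = w" using lambertW_mult_exp[OF \<open>w > 0\<close>] w by simp
  ultimately show "lambertW z > 0" "lambertW z * exp (lambertW z) = z" using w by auto
qed

lemma lambertW_strict_mono:
  fixes x y :: real
  assumes "0 < x" "x < y"
  shows "lambertW x < lambertW y"
proof (rule ccontr)
  assume "\<not> lambertW x < lambertW y"
  then have "lambertW y \<le> lambertW x" by simp
  have "y = lambertW y * exp (lambertW y)" using lambertW_times_exp[of y] assms by simp
  also have "\<dots> \<le> lambertW x * exp (lambertW x)"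
    using \<open>lambertW y \<le> lambertW x\<close> lambertW_pos[of x] assms
    by (intro mult_mono) (simp_all add: less_imp_le)
  also have "\<dots> = x" using lambertW_times_exp[of x] assms by simp
  finally show False using assms by simp
qed

lemma lambertW_shifted_bounds:
  fixes S :: real
  assumes "S > 0"
  shows "1 < lambertW ((1 + S) * exp 1)" "lambertW ((1 + S) * exp 1) < 1 + S"
proof -
  have "1 = lambertW (1 * exp 1)" using lambertW_mult_exp[of 1] by simp
  also have "\<dots> < lambertW ((1 + S) * exp 1)" using assms by (intro lambertW_strict_mono) auto
  finally show "1 < lambertW ((1 + S) * exp 1)" .
  have "lambertW ((1 + S) * exp 1) < lambertW ((1 + S) * exp (1 + S))"
    using assms by (intro lambertW_strict_mono) auto
  also have "\<dots> = 1 + S" using assms by (intro lambertW_mult_exp) simp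
  finally show "lambertW ((1 + S) * exp 1) < 1 + S" .
qed

lemma lambertW_maximizer_mem:
  fixes S :: real
  assumes "S > 0"
  shows "(1 / S) * ((1 + S) / lambertW ((1 + S) * exp 1) - 1) \<in> {0<..<1}"
proof -
  define W where "W = lambertW ((1 + S) * exp 1)"
  have W: "1 < W" "W < 1 + S" using lambertW_shifted_bounds[OF assms] W_def by auto
  moreover have "(1 + S) * 1 < (1 + S) * W" using W assms by (intro mult_strict_left_mono) auto
  ultimately have "0 < (1 + S) / W - 1" "(1 + S) / W - 1 < S"
    using assms by (simp_all add: field_simps)
  then show ?thesis
    unfolding W_def[symmetric] using assms by (simp add: field_simps)
qed

lemma ln_div_lambertW:
  fixes a :: real
  assumes "a > 0"
  shows "ln (a / lambertW (a * exp 1)) = lambertW (a * exp 1) - 1"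
proof -
  define W where "W = lambertW (a * exp 1)"
  have "W > 0" using lambertW_pos[of "a * exp 1"] assms W_def by simp
  have "ln W + W = ln (W * exp W)" using \<open>W > 0\<close> by (simp add: ln_mult)
  also have "\<dots> = ln a + 1"
    using lambertW_times_exp[of "a * exp 1"] assms by (simp add: W_def ln_mult)
  finally show ?thesis using assms \<open>W > 0\<close> by (simp add: ln_div W_def[symmetric])
qed

lemma diff_mult_ln_le_stationary:
  fixes a u m :: real
  assumes "0 < u" "u \<le> a" "0 < m" and stationary: "ln m = a / m - 1"
  shows "(a - u) * ln u \<le> (a - m) * ln m"
proof -
  have "ln (u / m) \<le> u / m - 1" using assms by (intro ln_le_minus_one) auto
  then have "ln u \<le> ln m + u / m - 1" using assms by (simp add: ln_div)
  then have "(a - u) * ln u \<le> (a - u) * (ln m + u / m - 1)"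
    using assms by (intro mult_left_mono) auto
  also have "\<dots> = (a - u) * (a + u - 2 * m) / m"
    unfolding stationary using assms by (simp add: field_simps)
  also have "\<dots> \<le> (a - m) * (a - m) / m"
  proof (rule divide_right_mono)
    have "(a - m) * (a - m) - (a - u) * (a + u - 2 * m) = (u - m)\<^sup>2"
      by (simp add: power2_eq_square algebra_simps)
    then show "(a - u) * (a + u - 2 * m) \<le> (a - m) * (a - m)"
      using zero_le_power2[of "u - m"] by linarith
  qed (use assms in simp)
  also have "\<dots> = (a - m) * ln m"
    unfolding stationary using assms by (simp add: field_simps)
  finally show ?thesis .
qed

lemma one_minus_mult_ln_le_at_lambertW:
  fixes S \<zeta> :: real
  assumes "S > 0" "0 \<le> \<zeta>" "\<zeta> \<le> 1"
  defines "\<zeta>m \<equiv> (1 / S) * ((1 + S) / lambertW ((1 + S) * exp 1) - 1)"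
  shows "(1 - \<zeta>) * ln (1 + \<zeta> * S) \<le> (1 - \<zeta>m) * ln (1 + \<zeta>m * S)"
proof -
  define W where "W = lambertW ((1 + S) * exp 1)"
  have W: "1 < W" "W < 1 + S" using lambertW_shifted_bounds[OF \<open>S > 0\<close>] W_def by auto
  have m: "1 + \<zeta>m * S = (1 + S) / W" using assms W by (simp add: \<zeta>m_def W_def[symmetric])
  have "\<zeta> * S \<le> 1 * S" using assms by (intro mult_right_mono) auto
  then have "((1 + S) - (1 + \<zeta> * S)) * ln (1 + \<zeta> * S)
      \<le> ((1 + S) - (1 + S) / W) * ln ((1 + S) / W)"
    using \<open>S > 0\<close> \<open>0 \<le> \<zeta>\<close> W ln_div_lambertW[of "1 + S"]
    by (intro diff_mult_ln_le_stationary) (auto simp: W_def add_pos_nonneg)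
  then have "S * ((1 - \<zeta>) * ln (1 + \<zeta> * S)) \<le> S * ((1 - \<zeta>m) * ln (1 + \<zeta>m * S))"
    unfolding m[symmetric] by (simp add: algebra_simps)
  then show ?thesis using \<open>S > 0\<close> by simp
qed

lemma concave_on_one_minus_mult_ln:
  fixes S :: real
  assumes "S \<ge> 0"
  shows "concave_on {0..1} (\<lambda>\<zeta>. (1 - \<zeta>) * ln (1 + \<zeta> * S))"
  unfolding concave_on_def
proof (rule f''_ge0_imp_convex)
  fix x :: real assume "x \<in> {0..1}"
  then have pos: "1 + x * S > 0" using assms by (simp add: add_pos_nonneg)
  show "((\<lambda>\<zeta>. - ((1 - \<zeta>) * ln (1 + \<zeta> * S)))
      has_real_derivative (ln (1 + x * S) - (1 - x) * S / (1 + x * S))) (at x)"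
    using pos by - (rule derivative_eq_intros refl | (simp; fail))+
  show "((\<lambda>\<zeta>. ln (1 + \<zeta> * S) - (1 - \<zeta>) * S / (1 + \<zeta> * S))
      has_real_derivative (S / (1 + x * S) + S * (1 + S) / (1 + x * S)\<^sup>2)) (at x)"
    using pos
    by - ((rule derivative_eq_intros refl | (simp; fail))+,
          simp add: divide_simps power2_eq_square, simp add: algebra_simps)
  show "0 \<le> S / (1 + x * S) + S * (1 + S) / (1 + x * S)\<^sup>2" using pos assms by simp
qed simp

text \<open>No range condition on \<open>tau_p\<close> is needed: at \<open>tau_p = 0\<close> both sides vanish because
  \<open>1 / 0 = 0\<close>.\<close>

lemma rate_arp_eq_SIR_rp:
  assumes "SIR_rp PhiD K tau_c p q beta k > 0"
  shows "rate_arp PhiD K tau_c B_W p q beta k tau_p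
    = B_W * (1 - tau_p / tau_c) * log 2 (1 + tau_p / tau_c * SIR_rp PhiD K tau_c p q beta k)"
proof -
  have "interf PhiD K p q beta k \<noteq> 0" "tau_c \<noteq> 0" using assms by (auto simp: SIR_rp_def)
  then show ?thesis unfolding rate_arp_def SIR_rp_def by (simp add: field_simps)
qed

theorem corollary3:
  fixes PhiD :: "nat set" and K k :: nat and tau_c B_W :: real
    and p q beta :: "nat \<Rightarrow> nat \<Rightarrow> real"
  assumes "finite PhiD" and "0 \<in> PhiD" and "K \<ge> 1" and "1 \<le> k" and "k \<le> K"
    and "tau_c > 0" and "B_W > 0"
    and "\<And>l i. l \<in> PhiD \<Longrightarrow> 1 \<le> i \<Longrightarrow> i \<le> K \<Longrightarrow> p l i > 0"
    and "\<And>l i. l \<in> PhiD \<Longrightarrow> 1 \<le> i \<Longrightarrow> i \<le> K \<Longrightarrow> q l i > 0"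
    and "\<And>l i. l \<in> PhiD \<Longrightarrow> 1 \<le> i \<Longrightarrow> i \<le> K \<Longrightarrow> beta l i > 0"
    and "SIR_rp PhiD K tau_c p q beta k > 0"
  shows "let S = SIR_rp PhiD K tau_c p q beta k;
             f = (\<lambda>\<zeta>::real. B_W * (1 - \<zeta>) * log 2 (1 + \<zeta> * S));
             \<zeta>max = (1 / S) * ((1 + S) / lambertW ((1 + S) * exp 1) - 1)
         in (\<forall>tau_p. 0 < tau_p \<and> tau_p \<le> tau_c \<longrightarrow>
                rate_arp PhiD K tau_c B_W p q beta k tau_p = f (tau_p / tau_c))
          \<and> concave_on {0..1} f
          \<and> \<zeta>max \<in> {0<..<1}
          \<and> (\<forall>\<zeta>\<in>{0..1}. f \<zeta> \<le> f \<zeta>max)"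
proof -
  define S where "S = SIR_rp PhiD K tau_c p q beta k"
  define f where "f = (\<lambda>\<zeta>::real. B_W * (1 - \<zeta>) * log 2 (1 + \<zeta> * S))"
  define \<zeta>m where "\<zeta>m = (1 / S) * ((1 + S) / lambertW ((1 + S) * exp 1) - 1)"
  have "S > 0" using assms(11) S_def by simp
  have "0 \<le> B_W / ln 2" using assms(7) by simp
  have f_eq: "f = (\<lambda>\<zeta>. B_W / ln 2 * ((1 - \<zeta>) * ln (1 + \<zeta> * S)))"
    by (simp add: f_def log_def mult.assoc)
  have "\<forall>tau_p. 0 < tau_p \<and> tau_p \<le> tau_c \<longrightarrow>
      rate_arp PhiD K tau_c B_W p q beta k tau_p = f (tau_p / tau_c)"
    using rate_arp_eq_SIR_rp[OF assms(11)] by (simp add: f_def S_def)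
  moreover have "concave_on {0..1} f"
    unfolding f_eq using \<open>0 \<le> B_W / ln 2\<close> \<open>S > 0\<close>
    by (intro concave_on_cmul concave_on_one_minus_mult_ln) simp_all
  moreover have "\<zeta>m \<in> {0<..<1}"
    unfolding \<zeta>m_def using \<open>S > 0\<close> by (rule lambertW_maximizer_mem)
  moreover have "\<forall>\<zeta>\<in>{0..1}. f \<zeta> \<le> f \<zeta>m"
  proof
    fix \<zeta> :: real assume "\<zeta> \<in> {0..1}"
    then have "(1 - \<zeta>) * ln (1 + \<zeta> * S) \<le> (1 - \<zeta>m) * ln (1 + \<zeta>m * S)"
      unfolding \<zeta>m_def using \<open>S > 0\<close> by (intro one_minus_mult_ln_le_at_lambertW) auto
    then show "f \<zeta> \<le> f \<zeta>m" unfolding f_eq using \<open>0 \<le> B_W / ln 2\<close> by (rule mult_left_mono)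
  qed
  ultimately show ?thesis
    unfolding Let_def f_def \<zeta>m_def S_def by blast
qed

end
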